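(* For every $n\ge1$ and $x\in(0,1/2]$, the function $G_n$ satisfies $$\frac{n}{x^{1/n}}\ \ge\ G_n(1/x)\ \ge\ \frac12\cdot\frac{n}{x^{1/n}}\quad\text{when } x\le 2^{-n},$$ $$2\log_2(1/x)\ \ge\ G_n(1/x)\ \ge\ 2+\log\frac{1}{2x}\quad\text{when } x>2^{-n},$$ and $\displaystyle\lim_{x\to0^+}\frac{G_n(1/x)}{n/x^{1/n}}=1$.
   Context: $\log$ is the natural logarithm. The function $G_n$ on $[2,\infty)$: for $n=1$, $G_1(1/x)=1/x$. For $n>1$, $G_n(2)=2$, and for every $\gamma>0$, $$x\,G_n(1/x)=\frac{\gamma n}{(1+\gamma)^n-1}\left[\frac{(1+\gamma)^{n-1}\gamma(n-1)}{(1+\gamma)^{n-1}-1}\right]^{1-1/n}\quad\text{where}\quad x=\frac{(1+\gamma)^{n-1}[\gamma(n-1)-1]+1}{[(1+\gamma)^{n-1}-1][(1+\gamma)^n-1]}\in(0,1/2).$$ *)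

theory Defs
  imports "HOL-Analysis.Analysis"
begin

text \<open>Parametrisation of G_n for n > 1: the point x(gamma) in (0,1/2) and the value
  x * G_n(1/x) as functions of the parameter gamma > 0.\<close>

definition xpar :: "nat \<Rightarrow> real \<Rightarrow> real" where
  "xpar n \<gamma> =
     ((1 + \<gamma>) ^ (n - 1) * (\<gamma> * real (n - 1) - 1) + 1) /
     (((1 + \<gamma>) ^ (n - 1) - 1) * ((1 + \<gamma>) ^ n - 1))"

definition Fpar :: "nat \<Rightarrow> real \<Rightarrow> real" where
  "Fpar n \<gamma> =
     (\<gamma> * real n / ((1 + \<gamma>) ^ n - 1)) *
     ((1 + \<gamma>) ^ (n - 1) * \<gamma> * real (n - 1) / ((1 + \<gamma>) ^ (n - 1) - 1))
       powr (1 - 1 / real n)"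

definition G :: "nat \<Rightarrow> real \<Rightarrow> real" where
  "G n y =
     (if n = 1 then y
      else if y = 2 then 2
      else (THE v. \<exists>\<gamma>>0. xpar n \<gamma> = 1 / y \<and> v = Fpar n \<gamma> / xpar n \<gamma>))"

end

theory Submission
  imports Defs
begin

text \<open>Substitute t = 1 + \<gamma> and n = m + 1, and write S_k(t) = 1 + t + ... + t^(k-1) and
  P_m(t) = \<Sum>j<m. (j+1) t^j (geom_sum k t and geom_wsum m t below). Then y = 1/x = S_m S_n / P_m
  increases strictly from 2 to \<infinity> as t runs through [1, \<infinity>), and
  G_n(y) = n (S_m / P_m) (m t^m / S_m)^(m/n). Differentiating along this curve,
  dG_n/dy = (m / (t S_m))^(m/n), which lies between 1/y and (2 / ln 2) / y as long as y \<le> 2^n;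
  integrating from y = 2, where G_n = 2, gives the two logarithmic bounds. On the other hand
  G_n^n = n^n y m^m t^(m^2) / (S_n P_m^m), and the last factor lies between (1 + m/t)^(-n) and 1.
  Since t \<ge> 2 once y \<ge> 2^n and t \<rightarrow> \<infinity> as x \<rightarrow> 0, this gives the power bounds and the limit.\<close>

section \<open>Geometric sums\<close>

definition geom_sum :: "nat \<Rightarrow> real \<Rightarrow> real" where
  "geom_sum m t = (\<Sum>j<m. t ^ j)"

definition geom_wsum :: "nat \<Rightarrow> real \<Rightarrow> real" where
  "geom_wsum m t = (\<Sum>j<m. real (j + 1) * t ^ j)"

definition geom_sum_deriv :: "nat \<Rightarrow> real \<Rightarrow> real" where
  "geom_sum_deriv m t = (\<Sum>j<m. real j * t ^ (j - 1))"

definition geom_wsum_deriv :: "nat \<Rightarrow> real \<Rightarrow> real" where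
  "geom_wsum_deriv m t = (\<Sum>j<m. real (j + 1) * (real j * t ^ (j - 1)))"

lemma geom_sum_0 [simp]: "geom_sum 0 t = 0"
  by (simp add: geom_sum_def)

lemma geom_sum_Suc [simp]: "geom_sum (Suc m) t = geom_sum m t + t ^ m"
  by (simp add: geom_sum_def)

lemma geom_wsum_0 [simp]: "geom_wsum 0 t = 0"
  by (simp add: geom_wsum_def)

lemma geom_wsum_Suc [simp]: "geom_wsum (Suc m) t = geom_wsum m t + real (m + 1) * t ^ m"
  by (simp add: geom_wsum_def)

lemma geom_sum_deriv_0 [simp]: "geom_sum_deriv 0 t = 0"
  by (simp add: geom_sum_deriv_def)

lemma geom_sum_deriv_Suc [simp]:
  "geom_sum_deriv (Suc m) t = geom_sum_deriv m t + real m * t ^ (m - 1)"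
  by (simp add: geom_sum_deriv_def)

lemma geom_wsum_deriv_0 [simp]: "geom_wsum_deriv 0 t = 0"
  by (simp add: geom_wsum_deriv_def)

lemma geom_wsum_deriv_Suc [simp]:
  "geom_wsum_deriv (Suc m) t = geom_wsum_deriv m t + real (m + 1) * (real m * t ^ (m - 1))"
  by (simp add: geom_wsum_deriv_def)

lemma DERIV_geom_sum: "DERIV (geom_sum m) t :> geom_sum_deriv m t"
proof (induction m)
  case (Suc m)
  have "DERIV (\<lambda>t. geom_sum m t + t ^ m) t :> geom_sum_deriv m t + real m * t ^ (m - 1)"
    by (intro DERIV_add Suc DERIV_pow[THEN DERIV_cong]) simp
  then show ?case by simp
qed simp

lemma DERIV_geom_wsum: "DERIV (geom_wsum m) t :> geom_wsum_deriv m t"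
proof (induction m)
  case (Suc m)
  have "DERIV (\<lambda>t. geom_wsum m t + real (m + 1) * t ^ m) t
          :> geom_wsum_deriv m t + real (m + 1) * (real m * t ^ (m - 1))"
    by (intro DERIV_add Suc DERIV_cmult DERIV_pow[THEN DERIV_cong]) simp
  then show ?case by simp
qed simp

lemma geom_sum_mult: "(t - 1) * geom_sum m t = t ^ m - 1"
  by (induction m) (auto simp: algebra_simps)

lemma geom_wsum_mult: "(t - 1) * geom_wsum m t = real m * t ^ m - geom_sum m t"
  by (induction m) (auto simp: algebra_simps)

lemma geom_sum_one: "geom_sum m 1 = real m"
  by (induction m) auto

lemma geom_wsum_one: "geom_wsum m 1 = real m * (real m + 1) / 2"
  by (induction m) (auto simp: field_simps)

lemma mult_geom_sum_deriv: "t * geom_sum_deriv m t = geom_wsum m t - geom_sum m t"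
proof (induction m)
  case (Suc m)
  have "t * geom_sum_deriv (Suc m) t = t * geom_sum_deriv m t + t * (real m * t ^ (m - 1))"
    by (simp add: algebra_simps)
  also have "t * (real m * t ^ (m - 1)) = real m * t ^ m"
    by (cases m) auto
  finally have "t * geom_sum_deriv (Suc m) t = t * geom_sum_deriv m t + real m * t ^ m" .
  then show ?case
    using Suc.IH by (simp add: ring_distribs)
qed simp

lemma geom_sum_nonneg: "t \<ge> 0 \<Longrightarrow> geom_sum m t \<ge> 0"
  unfolding geom_sum_def by (intro sum_nonneg) auto

lemma geom_wsum_nonneg: "t \<ge> 0 \<Longrightarrow> geom_wsum m t \<ge> 0"
  unfolding geom_wsum_def by (intro sum_nonneg) auto

lemma mult_geom_wsum_deriv_le:
  "t \<ge> 0 \<Longrightarrow> t * geom_wsum_deriv m t \<le> (real m - 1) * geom_wsum m t"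
proof (induction m)
  case (Suc m)
  have "t * (real (m + 1) * (real m * t ^ (m - 1))) = real (m + 1) * real m * t ^ m"
    by (cases m) auto
  then show ?case
    using Suc geom_wsum_nonneg[of t m] by (simp add: algebra_simps)
qed simp

lemma geom_sum_ge: "t \<ge> 1 \<Longrightarrow> real m \<le> geom_sum m t"
proof (induction m)
  case (Suc m)
  show ?case
    using Suc.IH[OF Suc.prems] one_le_power[OF Suc.prems, of m] by simp
qed simp

lemma geom_sum_pos: "m \<ge> 1 \<Longrightarrow> t \<ge> 1 \<Longrightarrow> geom_sum m t > 0"
  using geom_sum_ge[of t m] by linarith

lemma mult_geom_sum_le: "t \<ge> 1 \<Longrightarrow> t * geom_sum m t \<le> real m * t ^ m"
proof (induction m)
  case (Suc m)
  have "t * geom_sum (Suc m) t = t * geom_sum m t + t ^ Suc m"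
    by (simp add: algebra_simps)
  also have "\<dots> \<le> real m * t ^ m + t ^ Suc m"
    using Suc by simp
  also have "\<dots> \<le> real m * t ^ Suc m + t ^ Suc m"
    using Suc.prems by (simp add: mult_left_mono power_increasing)
  also have "\<dots> = real (Suc m) * t ^ Suc m"
    by (simp add: algebra_simps)
  finally show ?case .
qed simp

lemma geom_sum_le:
  assumes "t \<ge> 1"
  shows "geom_sum m t \<le> real m * t ^ m"
proof -
  have "geom_sum m t \<le> t * geom_sum m t"
    using assms geom_sum_nonneg[of t m] mult_right_mono[of 1 t "geom_sum m t"] by simp
  also have "\<dots> \<le> real m * t ^ m"
    using assms by (rule mult_geom_sum_le)
  finally show ?thesis .
qed

lemma geom_sum_Suc_le:
  assumes "t \<ge> 1"
  shows "geom_sum (Suc m) t \<le> t ^ m * (1 + real m / t)"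
  using assms mult_geom_sum_le[of t m] by (simp add: field_simps)

lemma geom_sum_Suc_le_two:
  assumes "t \<ge> 2"
  shows "geom_sum (Suc m) t \<le> t ^ m * 2"
proof -
  have "(t - 1) * geom_sum (Suc m) t = t ^ Suc m - 1"
    by (rule geom_sum_mult)
  also have "\<dots> \<le> (t - 1) * (t ^ m * 2)"
  proof -
    have "t ^ m * t \<le> t ^ m * (2 * (t - 1))"
      using assms by (intro mult_left_mono) auto
    then show ?thesis
      by (simp add: algebra_simps)
  qed
  finally show ?thesis
    using assms by (simp del: geom_sum_Suc)
qed

lemma mult_geom_wsum_ge: "t \<ge> 0 \<Longrightarrow> real m * t ^ m \<le> t * geom_wsum m t"
proof (induction m)
  case (Suc m)
  then show ?case
    using geom_wsum_nonneg[of t m] by (simp add: algebra_simps)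
qed simp

lemma mult_geom_wsum_le: "t \<ge> 0 \<Longrightarrow> t * geom_wsum m t \<le> real m * geom_sum (Suc m) t"
proof (induction m)
  case (Suc m)
  then show ?case
    using geom_sum_nonneg[of t "Suc m"] by (simp add: algebra_simps)
qed simp

lemma geom_wsum_pos:
  assumes "m \<ge> 1" "t > 0"
  shows "geom_wsum m t > 0"
proof -
  have "0 < real m * t ^ m"
    using assms by simp
  also have "\<dots> \<le> t * geom_wsum m t"
    using assms by (intro mult_geom_wsum_ge) simp
  finally show ?thesis
    using assms by (simp add: zero_less_mult_iff)
qed

lemma geom_sum_le_wsum: "t \<ge> 0 \<Longrightarrow> geom_sum m t \<le> geom_wsum m t"
proof (induction m)
  case (Suc m)
  have "1 * t ^ m \<le> real (m + 1) * t ^ m"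
    using Suc.prems by (intro mult_right_mono) auto
  with Suc show ?case
    by simp
qed simp

text \<open>Chebyshev's sum inequality: the weights j and t^j are similarly ordered.\<close>

lemma geom_sum_chebyshev:
  "t \<ge> 1 \<Longrightarrow> (real m - 1) * geom_sum m t \<le> 2 * (geom_wsum m t - geom_sum m t)"
proof (induction m)
  case (Suc m)
  then show ?case
    using geom_sum_le[of t m] by (simp add: algebra_simps)
qed simp

lemma geom_sum_wsum_identity:
  "(t ^ m - 1) * geom_wsum m t + geom_sum m t * geom_sum (Suc m) t
     = real (Suc m) * t ^ m * geom_sum m t"
proof -
  have "(t ^ m - 1) * geom_wsum m t = geom_sum m t * ((t - 1) * geom_wsum m t)"
    by (simp flip: geom_sum_mult add: algebra_simps)
  also have "\<dots> = geom_sum m t * (real m * t ^ m - geom_sum m t)"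
    by (simp add: geom_wsum_mult)
  finally show ?thesis
    by (simp add: algebra_simps)
qed

lemma geom_sum_wsum_diff_mult:
  "(t - 1)\<^sup>2 * ((real m + 1) * geom_sum m t - geom_wsum m t) = t ^ Suc m - (real m + 1) * t + real m"
proof -
  have "(t - 1)\<^sup>2 * ((real m + 1) * geom_sum m t - geom_wsum m t)
      = (t - 1) * ((real m + 1) * ((t - 1) * geom_sum m t) - (t - 1) * geom_wsum m t)"
    by (simp add: power2_eq_square algebra_simps)
  also have "\<dots> = (t - 1) * ((real m + 1) * (t ^ m - 1) - (real m * t ^ m - geom_sum m t))"
    by (simp add: geom_sum_mult geom_wsum_mult)
  also have "\<dots> = (t - 1) * t ^ m - (real m + 1) * (t - 1) + (t - 1) * geom_sum m t"
    by (simp add: algebra_simps)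
  also have "\<dots> = (t - 1) * t ^ m - (real m + 1) * (t - 1) + (t ^ m - 1)"
    by (simp only: geom_sum_mult)
  also have "\<dots> = t ^ Suc m - (real m + 1) * t + real m"
    by (simp add: algebra_simps)
  finally show ?thesis .
qed

section \<open>The parametrisation of G_n\<close>

text \<open>In the variable t = 1 + \<gamma> and with n = m + 1, ypar m t is 1 / xpar n \<gamma> and Gpar m t is
  G_n at that point (lemma G_Suc_param); G_slope m t is the derivative dG_n/dy there.\<close>

definition ypar :: "nat \<Rightarrow> real \<Rightarrow> real" where
  "ypar m t = geom_sum m t * geom_sum (Suc m) t / geom_wsum m t"

definition G_slope :: "nat \<Rightarrow> real \<Rightarrow> real" where
  "G_slope m t = (real m / (t * geom_sum m t)) powr (real m / real (Suc m))"

definition Gpar :: "nat \<Rightarrow> real \<Rightarrow> real" where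
  "Gpar m t = (t ^ m - 1 + ypar m t) * G_slope m t"

lemma ypar_pos: "m \<ge> 1 \<Longrightarrow> t \<ge> 1 \<Longrightarrow> ypar m t > 0"
  unfolding ypar_def using geom_sum_pos[of m t] geom_sum_pos[of "Suc m" t] geom_wsum_pos[of m t]
  by (simp del: geom_sum_Suc)

lemma G_slope_pos: "m \<ge> 1 \<Longrightarrow> t \<ge> 1 \<Longrightarrow> G_slope m t > 0"
  unfolding G_slope_def using geom_sum_pos[of m t] by simp

lemma Gpar_pos:
  assumes "m \<ge> 1" "t \<ge> 1"
  shows "Gpar m t > 0"
proof -
  have "t ^ m - 1 + ypar m t > 0"
    using one_le_power[OF assms(2), of m] ypar_pos[OF assms] by linarith
  then show ?thesis
    unfolding Gpar_def using G_slope_pos[OF assms] by simp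
qed

lemma ypar_one:
  assumes "m \<ge> 1"
  shows "ypar m 1 = 2"
proof -
  have "real m + real m * real m > 0"
    using assms by (intro add_pos_nonneg) auto
  then show ?thesis
    unfolding ypar_def geom_sum_one geom_wsum_one by (simp add: field_simps)
qed

lemma G_slope_one: "m \<ge> 1 \<Longrightarrow> G_slope m 1 = 1"
  unfolding G_slope_def by (simp add: geom_sum_one)

lemma Gpar_one: "m \<ge> 1 \<Longrightarrow> Gpar m 1 = 2"
  unfolding Gpar_def by (simp add: ypar_one G_slope_one)

lemma power_minus_one_plus_ypar:
  assumes "m \<ge> 1" "t \<ge> 1"
  shows "t ^ m - 1 + ypar m t = real (Suc m) * t ^ m * geom_sum m t / geom_wsum m t"
  using geom_sum_wsum_identity[of t m] geom_wsum_pos[of m t] assms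
  unfolding ypar_def by (simp add: field_simps del: geom_sum_Suc)

lemma power_mult_G_slope:
  assumes "m \<ge> 1" "t \<ge> 1"
  shows "t ^ m * G_slope m t = (real m * t ^ m / geom_sum m t) powr (real m / real (Suc m))"
proof -
  have "real m * t ^ m / geom_sum m t = real m / (t * geom_sum m t) * t ^ Suc m"
    using assms geom_sum_pos[of m t] by (simp add: field_simps)
  then have "(real m * t ^ m / geom_sum m t) powr (real m / real (Suc m))
      = (real m / (t * geom_sum m t) * t ^ Suc m) powr (real m / real (Suc m))"
    by (simp only:)
  also have "\<dots> = G_slope m t * (t ^ Suc m) powr (real m / real (Suc m))"
    unfolding G_slope_def by (rule powr_mult)
  also have "(t ^ Suc m) powr (real m / real (Suc m)) = t ^ m"
  proof -
    have "t ^ Suc m = t powr real (Suc m)"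
      by (rule powr_realpow[symmetric]) (use assms in simp)
    then have "(t ^ Suc m) powr (real m / real (Suc m)) = t powr real m"
      by (simp add: powr_powr)
    then show ?thesis
      using assms by (simp add: powr_realpow)
  qed
  finally show ?thesis
    by simp
qed

lemma Gpar_eq:
  assumes "m \<ge> 1" "t \<ge> 1"
  shows "Gpar m t = real (Suc m) * geom_sum m t / geom_wsum m t
                      * (real m * t ^ m / geom_sum m t) powr (real m / real (Suc m))"
  unfolding Gpar_def power_minus_one_plus_ypar[OF assms] power_mult_G_slope[OF assms, symmetric]
  by simp

lemma xpar_Suc_eq:
  assumes "m \<ge> 1" "t > 1"
  shows "xpar (Suc m) (t - 1) = 1 / ypar m t"
proof -
  have "(t - 1) * ((t - 1) * geom_wsum m t) = (t - 1) * (real m * t ^ m - geom_sum m t)"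
    by (simp add: geom_wsum_mult)
  also have "\<dots> = real m * t ^ m * (t - 1) - (t - 1) * geom_sum m t"
    by (simp add: algebra_simps)
  also have "\<dots> = real m * t ^ m * (t - 1) - (t ^ m - 1)"
    by (simp add: geom_sum_mult)
  finally have num: "t ^ m * ((t - 1) * real m - 1) + 1 = (t - 1) * ((t - 1) * geom_wsum m t)"
    by (simp add: algebra_simps)
  have "xpar (Suc m) (t - 1)
      = (t ^ m * ((t - 1) * real m - 1) + 1) / ((t ^ m - 1) * (t ^ Suc m - 1))"
    unfolding xpar_def by simp
  also have "\<dots> = ((t - 1) * (t - 1)) * geom_wsum m t
                   / (((t - 1) * (t - 1)) * (geom_sum m t * geom_sum (Suc m) t))"
    unfolding num geom_sum_mult[symmetric] by (simp add: algebra_simps del: geom_sum_Suc)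
  also have "\<dots> = 1 / ypar m t"
    using assms unfolding ypar_def by simp
  finally show ?thesis .
qed

lemma Fpar_Suc_eq:
  assumes "m \<ge> 1" "t > 1"
  shows "Fpar (Suc m) (t - 1) = real (Suc m) / geom_sum (Suc m) t
                                  * (real m * t ^ m / geom_sum m t) powr (real m / real (Suc m))"
proof -
  have "(t - 1) * real (Suc m) / (t ^ Suc m - 1) = real (Suc m) / geom_sum (Suc m) t"
    using assms unfolding geom_sum_mult[symmetric] by (simp del: geom_sum_Suc)
  moreover have "t ^ m * (t - 1) * real m / (t ^ m - 1) = real m * t ^ m / geom_sum m t"
    using assms unfolding geom_sum_mult[symmetric] by simp
  moreover have "1 - 1 / real (Suc m) = real m / real (Suc m)"
    by (simp add: field_simps)
  ultimately show ?thesis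
    unfolding Fpar_def by simp
qed

lemma Fpar_div_xpar_Suc_eq:
  assumes "m \<ge> 1" "t > 1"
  shows "Fpar (Suc m) (t - 1) / xpar (Suc m) (t - 1) = Gpar m t"
  using assms geom_sum_pos[of m t] geom_sum_pos[of "Suc m" t]
  unfolding Fpar_Suc_eq[OF assms] xpar_Suc_eq[OF assms] Gpar_eq[OF assms(1) less_imp_le[OF assms(2)]]
    ypar_def
  by (simp del: geom_sum_Suc)

definition ypar_deriv :: "nat \<Rightarrow> real \<Rightarrow> real" where
  "ypar_deriv m t =
     ((geom_sum m t * geom_sum_deriv (Suc m) t + geom_sum_deriv m t * geom_sum (Suc m) t)
        * geom_wsum m t
      - geom_sum m t * geom_sum (Suc m) t * geom_wsum_deriv m t) / (geom_wsum m t)\<^sup>2"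

lemma DERIV_ypar:
  assumes "m \<ge> 1" "t > 0"
  shows "DERIV (ypar m) t :> ypar_deriv m t"
proof -
  have "DERIV (\<lambda>t. geom_sum m t * geom_sum (Suc m) t) t
          :> geom_sum m t * geom_sum_deriv (Suc m) t + geom_sum_deriv m t * geom_sum (Suc m) t"
    by (rule DERIV_mult'[OF DERIV_geom_sum DERIV_geom_sum])
  from DERIV_divide[OF this DERIV_geom_wsum] show ?thesis
    using geom_wsum_pos[OF assms] unfolding ypar_def[abs_def] ypar_deriv_def power2_eq_square
    by (simp only: less_irrefl not_False_eq_True)
qed

lemma ypar_deriv_pos:
  assumes "m \<ge> 1" "t \<ge> 1"
  shows "ypar_deriv m t > 0"
proof -
  define S S' P where "S = geom_sum m t" and "S' = geom_sum (Suc m) t" and "P = geom_wsum m t"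
  define Sd Sd' Pd where "Sd = geom_sum_deriv m t" and "Sd' = geom_sum_deriv (Suc m) t"
    and "Pd = geom_wsum_deriv m t"
  have pos: "S > 0" "S' > 0" "P > 0"
    using assms geom_sum_pos[of m t] geom_sum_pos[of "Suc m" t] geom_wsum_pos[of m t]
    unfolding S_def S'_def P_def by (auto simp del: geom_sum_Suc)
  have "(real m - 1) * S * (S' * P) \<le> 2 * (t * Sd) * (S' * P)"
    using geom_sum_chebyshev[of t m] assms pos unfolding Sd_def S_def mult_geom_sum_deriv
    by (intro mult_right_mono) auto
  moreover have "real m * S' * (S * P) \<le> 2 * (t * Sd') * (S * P)"
    using geom_sum_chebyshev[of t "Suc m"] assms pos unfolding Sd'_def S'_def mult_geom_sum_deriv
    by (intro mult_right_mono) (auto simp del: geom_sum_Suc geom_wsum_Suc)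
  moreover have "S * S' * (t * Pd) \<le> S * S' * ((real m - 1) * P)"
    using mult_geom_wsum_deriv_le[of t m] assms pos unfolding Pd_def P_def
    by (intro mult_left_mono) auto
  ultimately have "(real m - 1) * S * (S' * P) + real m * S' * (S * P)
                     - 2 * (S * S' * ((real m - 1) * P))
                   \<le> 2 * (t * Sd) * (S' * P) + 2 * (t * Sd') * (S * P) - 2 * (S * S' * (t * Pd))"
    by linarith
  then have "S * S' * P \<le> 2 * t * ((S * Sd' + Sd * S') * P - S * S' * Pd)"
    by (simp add: algebra_simps)
  moreover have "S * S' * P > 0"
    using pos by simp
  ultimately have "0 < 2 * t * ((S * Sd' + Sd * S') * P - S * S' * Pd)"
    by linarith
  then have "(S * Sd' + Sd * S') * P - S * S' * Pd > 0"
    using assms by (simp add: zero_less_mult_iff)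
  moreover have "ypar_deriv m t = ((S * Sd' + Sd * S') * P - S * S' * Pd) / P\<^sup>2"
    unfolding ypar_deriv_def S_def S'_def P_def Sd_def Sd'_def Pd_def ..
  ultimately show ?thesis
    using pos by simp
qed

lemma ypar_strict_mono:
  assumes "m \<ge> 1" "1 \<le> a" "a < b"
  shows "ypar m a < ypar m b"
  using assms(3)
proof (rule DERIV_pos_imp_increasing)
  fix x assume "a \<le> x" "x \<le> b"
  then show "\<exists>y. DERIV (ypar m) x :> y \<and> y > 0"
    using DERIV_ypar[of m x] ypar_deriv_pos[of m x] assms by auto
qed

lemma ypar_mono: "m \<ge> 1 \<Longrightarrow> 1 \<le> a \<Longrightarrow> a \<le> b \<Longrightarrow> ypar m a \<le> ypar m b"
  using ypar_strict_mono[of m a b] by (cases "a = b") auto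

lemma ypar_inj:
  assumes "m \<ge> 1" "1 \<le> a" "1 \<le> b" "ypar m a = ypar m b"
  shows "a = b"
  using ypar_strict_mono[of m a b] ypar_strict_mono[of m b a] assms
  by (cases a b rule: linorder_cases) auto

lemma ypar_ge:
  assumes "m \<ge> 1" "t \<ge> 1"
  shows "t \<le> ypar m t"
proof -
  have "t * geom_wsum m t \<le> real m * geom_sum (Suc m) t"
    using assms by (intro mult_geom_wsum_le) simp
  also have "\<dots> \<le> geom_sum m t * geom_sum (Suc m) t"
    using assms geom_sum_ge[of t m] geom_sum_pos[of "Suc m" t]
    by (intro mult_right_mono) (auto simp del: geom_sum_Suc)
  finally show ?thesis
    using assms geom_wsum_pos[of m t] unfolding ypar_def by (simp add: le_divide_eq)
qed

lemma ypar_le_geom_sum_Suc: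
  assumes "m \<ge> 1" "t \<ge> 1"
  shows "ypar m t \<le> geom_sum (Suc m) t"
  using assms geom_sum_le_wsum[of t m] geom_sum_pos[of "Suc m" t] geom_wsum_pos[of m t]
  unfolding ypar_def by (simp add: divide_le_eq mult_right_mono del: geom_sum_Suc)

lemma ypar_attains:
  assumes "m \<ge> 1" "y \<ge> 2"
  obtains t where "t \<ge> 1" "ypar m t = y"
proof -
  have "\<exists>t. 1 \<le> t \<and> t \<le> y \<and> ypar m t = y"
  proof (rule IVT')
    show "continuous_on {1..y} (ypar m)"
      using assms by (intro continuous_at_imp_continuous_on ballI DERIV_isCont[OF DERIV_ypar]) auto
  qed (use assms ypar_ge[of m y] ypar_one[of m] in auto)
  then show ?thesis
    using that by blast
qed

lemma G_Suc_param:
  assumes m: "m \<ge> 1" and y: "y \<ge> 2"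
  obtains t where "t \<ge> 1" "ypar m t = y" "G (Suc m) y = Gpar m t"
proof (cases "y = 2")
  case True
  then show ?thesis
    using that[of 1] m by (simp add: G_def ypar_one Gpar_one)
next
  case False
  obtain t where t: "t \<ge> 1" "ypar m t = y"
    using ypar_attains[OF m y] .
  have t1: "t > 1"
    using t False ypar_one[OF m] by (cases "t = 1") auto
  have "G (Suc m) y = (THE v. \<exists>\<gamma>>0. xpar (Suc m) \<gamma> = 1 / y \<and> v = Fpar (Suc m) \<gamma> / xpar (Suc m) \<gamma>)"
    unfolding G_def using m False by simp
  also have "\<dots> = Gpar m t"
  proof (rule the_equality)
    show "\<exists>\<gamma>>0. xpar (Suc m) \<gamma> = 1 / y \<and> Gpar m t = Fpar (Suc m) \<gamma> / xpar (Suc m) \<gamma>"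
      using t t1 xpar_Suc_eq[OF m t1] Fpar_div_xpar_Suc_eq[OF m t1] by (intro exI[of _ "t - 1"]) simp
  next
    fix v
    assume "\<exists>\<gamma>>0. xpar (Suc m) \<gamma> = 1 / y \<and> v = Fpar (Suc m) \<gamma> / xpar (Suc m) \<gamma>"
    then obtain \<gamma> where \<gamma>: "\<gamma> > 0" "xpar (Suc m) \<gamma> = 1 / y" "v = Fpar (Suc m) \<gamma> / xpar (Suc m) \<gamma>"
      by blast
    have "\<gamma> + 1 > 1"
      using \<gamma> by simp
    then have "ypar m (\<gamma> + 1) = ypar m t"
      using \<gamma>(2) t(2) xpar_Suc_eq[OF m] by fastforce
    then have "\<gamma> + 1 = t"
      using ypar_inj[OF m _ t(1)] \<gamma>(1) by simp
    then have "\<gamma> = t - 1"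
      by simp
    then show "v = Gpar m t"
      using \<gamma>(3) Fpar_div_xpar_Suc_eq[OF m t1] by simp
  qed
  finally show ?thesis
    using that t by blast
qed

lemma G_Suc_inverse_param:
  assumes "m \<ge> 1" "0 < x" "x \<le> 1/2"
  obtains t where "t \<ge> 1" "ypar m t = 1 / x" "G (Suc m) (1 / x) = Gpar m t"
proof -
  have "2 \<le> 1 / x"
    using assms by (simp add: field_simps)
  then show ?thesis
    using G_Suc_param[OF assms(1)] that by blast
qed

section \<open>The logarithmic bounds\<close>

lemma DERIV_G_slope:
  assumes "m \<ge> 1" "t \<ge> 1"
  shows "DERIV (G_slope m) t
           :> - (real m / real (Suc m)) * G_slope m t * geom_wsum m t / (t * geom_sum m t)"
proof -
  define u where "u t = real m / (t * geom_sum m t)" for t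
  have pos: "geom_sum m t > 0" "t * geom_sum m t > 0" "u t > 0"
    using assms geom_sum_pos[of m t] by (auto simp: u_def)
  have "DERIV (\<lambda>t. t * geom_sum m t) t :> geom_wsum m t"
    using DERIV_mult[OF DERIV_ident DERIV_geom_sum[of m t]] mult_geom_sum_deriv[of t m]
    by (simp add: algebra_simps)
  from DERIV_divide[OF DERIV_const[of "real m"] this] have du:
    "DERIV u t :> (0 * (t * geom_sum m t) - real m * geom_wsum m t) / ((t * geom_sum m t) * (t * geom_sum m t))"
    using pos assms unfolding u_def[abs_def] by simp
  have "G_slope m = (\<lambda>t. u t powr (real m / real (Suc m)))"
    by (simp add: fun_eq_iff G_slope_def u_def)
  moreover have "u t powr (real m / real (Suc m) - 1) = G_slope m t / u t"
    using pos by (simp add: powr_diff G_slope_def u_def)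
  ultimately show ?thesis
    using DERIV_fun_powr[OF du pos(3), of "real m / real (Suc m)"] pos assms
    by (simp add: u_def field_simps)
qed

text \<open>The derivative of the factor t^m - 1 cancels against that of G_slope, so that
  Gpar has derivative G_slope with respect to ypar.\<close>

lemma DERIV_Gpar:
  assumes "m \<ge> 1" "t \<ge> 1"
  shows "DERIV (Gpar m) t :> ypar_deriv m t * G_slope m t"
proof -
  have pos: "geom_sum m t > 0" "geom_wsum m t > 0"
    using assms geom_sum_pos[of m t] geom_wsum_pos[of m t] by auto
  have "DERIV (\<lambda>t. t ^ m - 1 + ypar m t) t :> real m * t ^ (m - 1) + ypar_deriv m t"
    using DERIV_add[OF DERIV_diff[OF DERIV_pow DERIV_const] DERIV_ypar[of m t]] assms by simp
  from DERIV_mult[OF this DERIV_G_slope[OF assms]] have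
    "DERIV (Gpar m) t :> (real m * t ^ (m - 1) + ypar_deriv m t) * G_slope m t
       - (real m / real (Suc m)) * G_slope m t * geom_wsum m t / (t * geom_sum m t)
           * (t ^ m - 1 + ypar m t)"
    unfolding Gpar_def[abs_def] by simp
  moreover have "t * t ^ (m - 1) = t ^ m"
    using assms by (cases m) auto
  then have "(real m / real (Suc m)) * G_slope m t * geom_wsum m t / (t * geom_sum m t)
               * (t ^ m - 1 + ypar m t) = real m * t ^ (m - 1) * G_slope m t"
    unfolding power_minus_one_plus_ypar[OF assms] using pos assms
    by (simp add: field_simps del: of_nat_Suc)
  ultimately show ?thesis
    by (simp add: algebra_simps)
qed

lemma G_slope_ge:
  assumes "m \<ge> 1" "t \<ge> 1"
  shows "1 / ypar m t \<le> G_slope m t"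
proof -
  define g where "g = real m / (t * geom_sum m t)"
  have pos: "geom_sum m t > 0" "geom_sum (Suc m) t > 0" "geom_wsum m t > 0"
    using assms geom_sum_pos[of m t] geom_sum_pos[of "Suc m" t] geom_wsum_pos[of m t]
    by (auto simp del: geom_sum_Suc)
  have "t * geom_wsum m t \<le> real m * geom_sum (Suc m) t"
    using assms by (intro mult_geom_wsum_le) simp
  then have "1 / ypar m t \<le> g"
    using pos assms unfolding ypar_def g_def by (simp add: field_simps del: geom_sum_Suc)
  also have "g \<le> g powr (real m / real (Suc m))"
  proof -
    have "geom_sum m t \<le> t * geom_sum m t"
      using assms mult_right_mono[of 1 t "geom_sum m t"] pos by simp
    then have "real m \<le> t * geom_sum m t"
      using assms geom_sum_ge[of t m] by linarith
    then have "0 < g" "g \<le> 1"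
      using assms pos unfolding g_def by (auto simp: divide_le_eq)
    then have "g powr 1 \<le> g powr (real m / real (Suc m))"
      by (intro powr_mono') auto
    then show ?thesis
      using \<open>0 < g\<close> by simp
  qed
  also have "\<dots> = G_slope m t"
    unfolding G_slope_def g_def ..
  finally show ?thesis .
qed

lemma DERIV_ln_ypar:
  assumes "m \<ge> 1" "t \<ge> 1"
  shows "DERIV (\<lambda>s. ln (ypar m s)) t :> ypar_deriv m t / ypar m t"
  using DERIV_chain2[OF DERIV_ln_divide[OF ypar_pos[OF assms]] DERIV_ypar[of m t]] assms by simp

lemma Gpar_ge_two_plus_ln:
  assumes m: "m \<ge> 1" and t: "t \<ge> 1"
  shows "2 + ln (ypar m t / 2) \<le> Gpar m t"
proof -
  define f where "f s = Gpar m s - ln (ypar m s)" for s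
  have "f 1 \<le> f t"
  proof (rule DERIV_nonneg_imp_nondecreasing[OF t])
    fix s
    assume s: "1 \<le> s" "s \<le> t"
    have "DERIV f s :> ypar_deriv m s * (G_slope m s - 1 / ypar m s)"
      unfolding f_def[abs_def] using DERIV_diff[OF DERIV_Gpar DERIV_ln_ypar] m s
      by (simp add: algebra_simps)
    moreover have "ypar_deriv m s * (G_slope m s - 1 / ypar m s) \<ge> 0"
      using ypar_deriv_pos[of m s] G_slope_ge[of m s] m s by simp
    ultimately show "\<exists>y. DERIV f s :> y \<and> y \<ge> 0"
      by blast
  qed
  then show ?thesis
    using m ypar_pos[OF m t] unfolding f_def by (simp add: Gpar_one ypar_one ln_div)
qed

definition geom_ratio :: "nat \<Rightarrow> real \<Rightarrow> real" where
  "geom_ratio m t = real m * geom_sum (Suc m) t / (t * geom_wsum m t)"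

lemma geom_ratio_pos: "m \<ge> 1 \<Longrightarrow> t \<ge> 1 \<Longrightarrow> geom_ratio m t > 0"
  unfolding geom_ratio_def using geom_sum_pos[of "Suc m" t] geom_wsum_pos[of m t]
  by (simp del: geom_sum_Suc)

lemma geom_ratio_le_near_one:
  assumes "m \<ge> 1" "t \<ge> 1"
  shows "geom_ratio m t \<le> 1 + 1 / t"
proof -
  have "(t + 1) * geom_wsum m t - real m * geom_sum (Suc m) t
          = 2 * (geom_wsum m t - geom_sum m t) - (real m - 1) * geom_sum m t"
    using geom_wsum_mult[of t m] by (simp add: algebra_simps)
  then have "real m * geom_sum (Suc m) t \<le> (t + 1) * geom_wsum m t"
    using geom_sum_chebyshev[of t m] assms by linarith
  then show ?thesis
    using assms geom_wsum_pos[of m t] unfolding geom_ratio_def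
    by (simp add: field_simps del: geom_sum_Suc)
qed

lemma geom_ratio_le_far_from_one:
  assumes "m \<ge> 1" "t > 1"
  shows "geom_ratio m t \<le> 1 + t / (t - 1)\<^sup>2 / real m"
proof -
  have "0 \<le> (real m + 1) * (t - 1)"
    using assms by simp
  then have "(t - 1)\<^sup>2 * ((real m + 1) * geom_sum m t - geom_wsum m t) \<le> t ^ Suc m"
    unfolding geom_sum_wsum_diff_mult by (simp add: algebra_simps)
  then have "(real m + 1) * geom_sum m t - geom_wsum m t \<le> t ^ Suc m / (t - 1)\<^sup>2"
    using assms by (simp add: pos_le_divide_eq mult.commute)
  also have "\<dots> = real m * t ^ m * (t / (t - 1)\<^sup>2 / real m)"
    using assms by simp
  also have "\<dots> \<le> t * geom_wsum m t * (t / (t - 1)\<^sup>2 / real m)"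
    using assms mult_geom_wsum_ge[of t m] by (intro mult_right_mono) auto
  finally have "real m * geom_sum (Suc m) t \<le> t * geom_wsum m t * (1 + t / (t - 1)\<^sup>2 / real m)"
    using geom_wsum_mult[of t m] by (simp add: algebra_simps)
  then show ?thesis
    using assms geom_wsum_pos[of m t] unfolding geom_ratio_def
    by (simp add: divide_le_eq mult.commute del: geom_sum_Suc)
qed

lemma powr_divide_power:
  fixes x :: real
  assumes "x > 0" "n > 0"
  shows "(x powr (real k / real n)) ^ n = x ^ k"
proof -
  have "(x powr (real k / real n)) ^ n = (x powr (real k / real n)) powr real n"
    using assms by (simp add: powr_realpow)
  also have "\<dots> = x ^ k"
    using assms by (simp add: powr_powr powr_realpow)
  finally show ?thesis .
qed

lemma G_slope_power:
  assumes "m \<ge> 1" "t \<ge> 1"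
  shows "G_slope m t ^ Suc m = (real m / (t * geom_sum m t)) ^ m"
  unfolding G_slope_def using assms geom_sum_pos[of m t] by (intro powr_divide_power) auto

lemma G_slope_mult_ypar_power:
  assumes "m \<ge> 1" "t \<ge> 1"
  shows "(G_slope m t * ypar m t) ^ Suc m = geom_ratio m t ^ Suc m * (t * geom_sum m t / real m)"
proof -
  define z where "z = real m / (t * geom_sum m t)"
  have pos: "geom_sum m t > 0" "geom_sum (Suc m) t > 0" "geom_wsum m t > 0" "z > 0"
    using assms geom_sum_pos[of m t] geom_sum_pos[of "Suc m" t] geom_wsum_pos[of m t]
    unfolding z_def by (auto simp del: geom_sum_Suc)
  have "ypar m t = geom_ratio m t / z"
    using pos assms unfolding ypar_def geom_ratio_def z_def by (simp add: field_simps del: geom_sum_Suc)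
  then have "(G_slope m t * ypar m t) ^ Suc m = z ^ m * (geom_ratio m t / z) ^ Suc m"
    unfolding power_mult_distrib G_slope_power[OF assms] z_def by simp
  also have "\<dots> = geom_ratio m t ^ Suc m / z"
    using pos by (simp add: power_divide field_simps)
  finally show ?thesis
    unfolding z_def by simp
qed

lemma ln2_le: "ln (2::real) \<le> 6932/10000"
proof -
  obtain c where "exp (6932/10000::real)
      = (\<Sum>k<8. (6932/10000) ^ k / fact k) + exp c / fact 8 * (6932/10000) ^ 8"
    using Maclaurin_exp_le[of "6932/10000::real" 8] by blast
  moreover have "exp c / fact 8 * (6932/10000::real) ^ 8 \<ge> 0"
    by simp
  moreover have "(\<Sum>k<8. (6932/10000::real) ^ k / fact k) \<ge> 2"
    by (simp add: eval_nat_numeral fact_numeral)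
  ultimately have "exp (6932/10000::real) \<ge> 2"
    by linarith
  then show ?thesis
    by (metis exp_le_cancel_iff exp_ln zero_less_numeral)
qed

lemma ln2_mult_exp_le: "ln (2::real) * exp (68/225) \<le> 1"
proof -
  obtain c where "exp (-68/225::real)
      = (\<Sum>k<4. (-68/225) ^ k / fact k) + exp c / fact 4 * (-68/225) ^ 4"
    using Maclaurin_exp_le[of "-68/225::real" 4] by blast
  moreover have "exp c / fact 4 * (-68/225::real) ^ 4 \<ge> 0"
    by simp
  moreover have "(\<Sum>k<4. (-68/225::real) ^ k / fact k) \<ge> 6932/10000"
    by (simp add: eval_nat_numeral fact_numeral)
  ultimately have "ln 2 \<le> exp (-68/225::real)"
    using ln2_le by linarith
  then have "ln 2 * exp (68/225) \<le> exp (-68/225::real) * exp (68/225)"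
    by (simp add: mult_right_mono)
  also have "\<dots> = 1"
    by (simp flip: exp_add)
  finally show ?thesis .
qed

text \<open>The threshold 32/17 separates the two cases below: for t \<le> 32/17 we have
  1 + t \<le> 49/17 < 2 / ln 2, and for t > 32/17 we have 1/t < 17/32 and
  t / (t - 1)^2 < 544/225 = 8 * 68/225.\<close>

lemma geom_ratio_power_le_small:
  assumes m: "1 \<le> m" "m \<le> 6" and t: "t > 32/17"
  shows "geom_ratio m t ^ m \<le> (1 / ln 2) ^ Suc m"
proof -
  have "geom_ratio m t \<le> 1 + 1 / t"
    using geom_ratio_le_near_one[OF m(1), of t] t by simp
  also have "\<dots> \<le> 49/32"
    using t by (simp add: divide_simps)
  finally have "geom_ratio m t ^ m \<le> (49/32) ^ m"
    using geom_ratio_pos[OF m(1), of t] t by (simp add: power_mono)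
  also have "(49/32::real) ^ m \<le> (10000/6932) ^ Suc m"
  proof -
    have "m = 1 \<or> m = 2 \<or> m = 3 \<or> m = 4 \<or> m = 5 \<or> m = 6"
      using m by arith
    then show ?thesis
      by (elim disjE) (simp_all add: eval_nat_numeral)
  qed
  also have "\<dots> \<le> (1 / ln 2) ^ Suc m"
    using ln2_le by (intro power_mono) (simp_all add: field_simps)
  finally show ?thesis .
qed

lemma geom_ratio_power_le_large:
  assumes m: "m \<ge> 7" and t: "t > 32/17"
  shows "geom_ratio m t ^ m \<le> (1 / ln 2) ^ Suc m"
proof -
  define b where "b = t / (t - 1)\<^sup>2"
  have "b \<ge> 0"
    using t unfolding b_def by (intro divide_nonneg_nonneg) auto
  have "geom_ratio m t ^ m \<le> (1 + b / real m) ^ m"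
    using geom_ratio_le_far_from_one[of m t] geom_ratio_pos[of m t] m t unfolding b_def
    by (intro power_mono) auto
  also have "\<dots> \<le> exp b"
    using m \<open>b \<ge> 0\<close> by (intro exp_ge_one_plus_x_over_n_power_n) auto
  also have "\<dots> \<le> exp (68/225) ^ 8"
  proof -
    have "(t - 1 - 15/17) * (544 * (t - 1) + 255) \<ge> 0"
      using t by (intro mult_nonneg_nonneg) auto
    then have "b \<le> 8 * (68/225)"
      using t unfolding b_def by (simp add: divide_simps power2_eq_square algebra_simps)
    then show ?thesis
      by (simp flip: exp_of_nat_mult)
  qed
  also have "\<dots> \<le> (1 / ln 2) ^ 8"
    using ln2_mult_exp_le by (intro power_mono) (simp_all add: field_simps)
  also have "\<dots> \<le> (1 / ln 2) ^ Suc m"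
  proof (rule power_increasing)
    show "1 \<le> 1 / ln (2::real)"
      using ln2_le by (simp add: field_simps)
  qed (use m in simp)
  finally show ?thesis .
qed

lemma geom_ratio_power_le:
  assumes "m \<ge> 1" "t > 32/17"
  shows "geom_ratio m t ^ m \<le> (1 / ln 2) ^ Suc m"
  using geom_ratio_power_le_small[of m t] geom_ratio_power_le_large[of m t] assms
  by (cases "m \<le> 6") auto

lemma G_slope_mult_ypar_le_near_one:
  assumes m: "m \<ge> 1" and t: "1 \<le> t" "t \<le> 32/17"
  shows "G_slope m t * ypar m t \<le> 2 / ln 2"
proof -
  have r: "geom_ratio m t > 0"
    using geom_ratio_pos[OF m t(1)] .
  have "geom_ratio m t ^ Suc m \<le> ((t + 1) / t) ^ Suc m"
    using geom_ratio_le_near_one[OF m t(1)] r t by (intro power_mono) (simp_all add: field_simps)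
  moreover have "t * geom_sum m t / real m \<le> t ^ Suc m"
    using geom_sum_le[OF t(1), of m] m t by (simp add: divide_le_eq mult.commute)
  ultimately have "(G_slope m t * ypar m t) ^ Suc m \<le> ((t + 1) / t) ^ Suc m * t ^ Suc m"
    unfolding G_slope_mult_ypar_power[OF m t(1)]
    using r t geom_sum_pos[OF m t(1)] by (intro mult_mono) simp_all
  also have "\<dots> = (t + 1) ^ Suc m"
    using t by (simp add: power_divide)
  also have "\<dots> \<le> (2 / ln 2) ^ Suc m"
  proof (rule power_mono)
    have "t + 1 \<le> 49/17"
      using t by simp
    also have "49/17 \<le> 2 / ln (2::real)"
      using ln2_le by (simp add: field_simps)
    finally show "t + 1 \<le> 2 / ln 2" .
  qed (use t in simp)
  finally show ?thesis
    by (rule power_le_imp_le_base) simp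
qed

lemma G_slope_mult_ypar_le_far_from_one:
  assumes m: "m \<ge> 1" and t: "t > 32/17" and y: "ypar m t \<le> 2 ^ Suc m"
  shows "G_slope m t * ypar m t \<le> 2 / ln 2"
proof -
  have t1: "t \<ge> 1"
    using t by simp
  have r: "geom_ratio m t > 0"
    using geom_ratio_pos[OF m t1] .
  have "t * geom_sum m t / real m = ypar m t / geom_ratio m t"
    using r m t1 geom_sum_pos[of m t] geom_sum_pos[of "Suc m" t] geom_wsum_pos[of m t]
    unfolding ypar_def geom_ratio_def by (simp add: field_simps del: geom_sum_Suc)
  also have "\<dots> \<le> 2 ^ Suc m / geom_ratio m t"
    using y r by (simp add: divide_right_mono)
  finally have "(G_slope m t * ypar m t) ^ Suc m
                  \<le> geom_ratio m t ^ Suc m * (2 ^ Suc m / geom_ratio m t)"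
    unfolding G_slope_mult_ypar_power[OF m t1] by (rule mult_left_mono) (use r in simp)
  also have "\<dots> = 2 ^ Suc m * geom_ratio m t ^ m"
    using r by (simp add: field_simps)
  also have "\<dots> \<le> 2 ^ Suc m * (1 / ln 2) ^ Suc m"
    using geom_ratio_power_le[OF m t] by (intro mult_left_mono) simp_all
  also have "\<dots> = (2 / ln 2) ^ Suc m"
    by (simp flip: power_mult_distrib)
  finally show ?thesis
    by (rule power_le_imp_le_base) simp
qed

lemma G_slope_mult_ypar_le:
  assumes "m \<ge> 1" "t \<ge> 1" "ypar m t \<le> 2 ^ Suc m"
  shows "G_slope m t * ypar m t \<le> 2 / ln 2"
  using G_slope_mult_ypar_le_near_one G_slope_mult_ypar_le_far_from_one assms
  by (cases "t \<le> 32/17") auto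

lemma Gpar_le_two_log2:
  assumes m: "m \<ge> 1" and t: "t \<ge> 1" and y: "ypar m t \<le> 2 ^ Suc m"
  shows "Gpar m t \<le> 2 / ln 2 * ln (ypar m t)"
proof -
  define f where "f s = 2 / ln 2 * ln (ypar m s) - Gpar m s" for s
  have "f 1 \<le> f t"
  proof (rule DERIV_nonneg_imp_nondecreasing[OF t])
    fix s
    assume s: "1 \<le> s" "s \<le> t"
    have "DERIV f s :> 2 / ln 2 * (ypar_deriv m s / ypar m s) - ypar_deriv m s * G_slope m s"
      unfolding f_def[abs_def] using m s
      by (intro DERIV_diff DERIV_cmult DERIV_Gpar DERIV_ln_ypar) auto
    then have "DERIV f s :> ypar_deriv m s * (2 / ln 2 / ypar m s - G_slope m s)"
      by (simp add: algebra_simps)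
    moreover have "G_slope m s * ypar m s \<le> 2 / ln 2"
      using G_slope_mult_ypar_le[of m s] ypar_mono[of m s t] m s y by simp
    then have "G_slope m s \<le> 2 / ln 2 / ypar m s"
      using ypar_pos[of m s] m s by (simp add: le_divide_eq mult_ac)
    then have "ypar_deriv m s * (2 / ln 2 / ypar m s - G_slope m s) \<ge> 0"
      using ypar_deriv_pos[of m s] m s by simp
    ultimately show "\<exists>y. DERIV f s :> y \<and> y \<ge> 0"
      by blast
  qed
  then show ?thesis
    unfolding f_def using m by (simp add: Gpar_one ypar_one)
qed

lemma G_Suc_ge_two_plus_ln:
  assumes m: "m \<ge> 1" and x: "0 < x" "x \<le> 1/2"
  shows "2 + ln (1 / (2 * x)) \<le> G (Suc m) (1 / x)"
proof -
  obtain t where t: "t \<ge> 1" "ypar m t = 1 / x" "G (Suc m) (1 / x) = Gpar m t"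
    using G_Suc_inverse_param[OF m x] .
  then show ?thesis
    using Gpar_ge_two_plus_ln[OF m t(1)] by (simp add: mult.commute)
qed

lemma G_Suc_le_two_log2:
  assumes m: "m \<ge> 1" and x: "(1/2) ^ Suc m < x" "x \<le> 1/2"
  shows "G (Suc m) (1 / x) \<le> 2 * log 2 (1 / x)"
proof -
  have "0 < (1/2::real) ^ Suc m"
    by simp
  with x(1) have "0 < x"
    by linarith
  then obtain t where t: "t \<ge> 1" "ypar m t = 1 / x" "G (Suc m) (1 / x) = Gpar m t"
    using G_Suc_inverse_param[OF m _ x(2)] by blast
  have "ypar m t \<le> 2 ^ Suc m"
    unfolding t(2) using x(1) \<open>0 < x\<close> by (simp add: field_simps power_divide)
  then have "Gpar m t \<le> 2 / ln 2 * ln (ypar m t)"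
    by (rule Gpar_le_two_log2[OF m t(1)])
  then show ?thesis
    using t by (simp add: log_def)
qed

section \<open>The power bounds and the limit\<close>

lemma Gpar_power:
  assumes "m \<ge> 1" "t \<ge> 1"
  shows "Gpar m t ^ Suc m * (geom_sum (Suc m) t * geom_wsum m t ^ m)
           = real (Suc m) ^ Suc m * ypar m t * (real m ^ m * t ^ (m * m))"
proof -
  have pos: "geom_sum m t > 0" "geom_wsum m t > 0"
    using assms geom_sum_pos[of m t] geom_wsum_pos[of m t] by auto
  have "((real m * t ^ m / geom_sum m t) powr (real m / real (Suc m))) ^ Suc m
      = (real m * t ^ m / geom_sum m t) ^ m"
    using assms pos by (intro powr_divide_power) auto
  then have "Gpar m t ^ Suc m
      = (real (Suc m) * geom_sum m t / geom_wsum m t) ^ Suc m * (real m * t ^ m / geom_sum m t) ^ m"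
    unfolding Gpar_eq[OF assms] power_mult_distrib by (simp only:)
  then show ?thesis
    using pos unfolding ypar_def
    by (simp add: power_divide power_mult_distrib power_mult[symmetric] field_simps
        del: geom_sum_Suc of_nat_Suc)
qed

lemma Gpar_power_le:
  assumes "m \<ge> 1" "t \<ge> 1"
  shows "Gpar m t ^ Suc m \<le> real (Suc m) ^ Suc m * ypar m t"
proof -
  have pos: "geom_sum (Suc m) t > 0" "geom_wsum m t > 0"
    using assms geom_sum_pos[of "Suc m" t] geom_wsum_pos[of m t] by (auto simp del: geom_sum_Suc)
  have "real m ^ m * t ^ (m * m) = (real m * t ^ m) ^ m"
    by (simp add: power_mult_distrib power_mult)
  also have "\<dots> \<le> (t * geom_wsum m t) ^ m"
    using assms mult_geom_wsum_ge[of t m] by (intro power_mono) auto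
  also have "\<dots> = t ^ m * geom_wsum m t ^ m"
    by (simp add: power_mult_distrib)
  also have "\<dots> \<le> geom_sum (Suc m) t * geom_wsum m t ^ m"
    using assms pos geom_sum_nonneg[of t m] by (intro mult_right_mono) auto
  finally have "Gpar m t ^ Suc m * (geom_sum (Suc m) t * geom_wsum m t ^ m)
      \<le> real (Suc m) ^ Suc m * ypar m t * (geom_sum (Suc m) t * geom_wsum m t ^ m)"
    unfolding Gpar_power[OF assms] using ypar_pos[OF assms] by (intro mult_left_mono) auto
  then show ?thesis
    using pos by simp
qed

lemma Gpar_power_ge:
  assumes "m \<ge> 1" "t \<ge> 1" and c: "geom_sum (Suc m) t \<le> t ^ m * c"
  shows "real (Suc m) ^ Suc m * ypar m t \<le> (c * Gpar m t) ^ Suc m"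
proof -
  have pos: "geom_sum (Suc m) t > 0" "geom_wsum m t > 0" "t ^ m > 0"
    using assms geom_sum_pos[of "Suc m" t] geom_wsum_pos[of m t] by (auto simp del: geom_sum_Suc)
  have "t ^ m * (geom_sum (Suc m) t * geom_wsum m t ^ m) = geom_sum (Suc m) t * (t * geom_wsum m t) ^ m"
    by (simp add: power_mult_distrib)
  also have "\<dots> \<le> geom_sum (Suc m) t * (real m * geom_sum (Suc m) t) ^ m"
    using assms pos mult_geom_wsum_le[of t m]
    by (intro mult_left_mono power_mono) (auto simp del: geom_sum_Suc)
  also have "\<dots> = real m ^ m * geom_sum (Suc m) t ^ Suc m"
    by (simp add: power_mult_distrib)
  also have "\<dots> \<le> real m ^ m * (t ^ m * c) ^ Suc m"
    using c pos by (intro mult_left_mono power_mono) auto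
  also have "\<dots> = t ^ m * (real m ^ m * t ^ (m * m) * c ^ Suc m)"
    by (simp add: power_mult_distrib power_mult[symmetric] algebra_simps)
  finally have "geom_sum (Suc m) t * geom_wsum m t ^ m \<le> real m ^ m * t ^ (m * m) * c ^ Suc m"
    using pos by simp
  then have "real (Suc m) ^ Suc m * ypar m t * (geom_sum (Suc m) t * geom_wsum m t ^ m)
      \<le> real (Suc m) ^ Suc m * ypar m t * (real m ^ m * t ^ (m * m) * c ^ Suc m)"
    using ypar_pos[OF assms(1,2)] by (intro mult_left_mono) auto
  also have "\<dots> = (c * Gpar m t) ^ Suc m * (geom_sum (Suc m) t * geom_wsum m t ^ m)"
    unfolding power_mult_distrib[of c] mult.assoc[of "c ^ Suc m"] Gpar_power[OF assms(1,2)]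
    by (simp add: algebra_simps)
  finally show ?thesis
    using pos by simp
qed

lemma root_bound_power:
  assumes "x > 0" "n > 0"
  shows "(real n / x powr (1 / real n)) ^ n = real n ^ n / x"
  using powr_divide_power[OF assms, of 1] by (simp add: power_divide)

lemma G_Suc_le_root:
  assumes m: "m \<ge> 1" and x: "0 < x" "x \<le> 1/2"
  shows "G (Suc m) (1 / x) \<le> real (Suc m) / x powr (1 / real (Suc m))"
proof -
  obtain t where t: "t \<ge> 1" "ypar m t = 1 / x" "G (Suc m) (1 / x) = Gpar m t"
    using G_Suc_inverse_param[OF m x] .
  have "Gpar m t ^ Suc m \<le> (real (Suc m) / x powr (1 / real (Suc m))) ^ Suc m"
    using Gpar_power_le[OF m t(1)] unfolding root_bound_power[OF x(1) zero_less_Suc] t(2)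
    by simp
  then show ?thesis
    unfolding t(3) by (rule power_le_imp_le_base) simp
qed

lemma G_Suc_ge_half_root:
  assumes m: "m \<ge> 1" and x: "0 < x" "x \<le> (1/2) ^ Suc m"
  shows "1/2 * (real (Suc m) / x powr (1 / real (Suc m))) \<le> G (Suc m) (1 / x)"
proof -
  have "x \<le> 1/2"
    using x(2) power_decreasing[of 1 "Suc m" "1/2::real"] by simp
  then obtain t where t: "t \<ge> 1" "ypar m t = 1 / x" "G (Suc m) (1 / x) = Gpar m t"
    using G_Suc_inverse_param[OF m x(1)] by blast
  have "ypar m 2 \<le> geom_sum (Suc m) 2"
    using ypar_le_geom_sum_Suc[OF m] by simp
  also have "\<dots> \<le> 2 ^ Suc m"
    using geom_sum_mult[of 2 "Suc m"] by simp
  also have "\<dots> \<le> ypar m t"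
    unfolding t(2) using x by (simp add: field_simps power_divide)
  finally have "t \<ge> 2"
    using ypar_strict_mono[OF m t(1), of 2] by (cases "t < 2") auto
  have "(real (Suc m) / x powr (1 / real (Suc m))) ^ Suc m \<le> (2 * Gpar m t) ^ Suc m"
    using Gpar_power_ge[OF m t(1) geom_sum_Suc_le_two[OF \<open>t \<ge> 2\<close>]]
    unfolding root_bound_power[OF x(1) zero_less_Suc] t(2) by simp
  then have "real (Suc m) / x powr (1 / real (Suc m)) \<le> 2 * Gpar m t"
    by (rule power_le_imp_le_base) (use Gpar_pos[OF m t(1)] in simp)
  then show ?thesis
    unfolding t(3) by simp
qed

lemma G_Suc_div_root_ge:
  assumes m: "m \<ge> 1" and x: "0 < x" "x \<le> 1/2"
  shows "1 / (1 + real m * (real (Suc m) * x) powr (1 / real (Suc m)))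
           \<le> G (Suc m) (1 / x) / (real (Suc m) / x powr (1 / real (Suc m)))"
proof -
  obtain t where t: "t \<ge> 1" "ypar m t = 1 / x" "G (Suc m) (1 / x) = Gpar m t"
    using G_Suc_inverse_param[OF m x] .
  define A where "A = real (Suc m) / x powr (1 / real (Suc m))"
  define B where "B = (real (Suc m) * x) powr (1 / real (Suc m))"
  have pos: "A > 0" "B > 0" "Gpar m t > 0"
    using x Gpar_pos[OF m t(1)] unfolding A_def B_def by auto
  have "A ^ Suc m \<le> ((1 + real m / t) * Gpar m t) ^ Suc m"
    using Gpar_power_ge[OF m t(1) geom_sum_Suc_le[OF t(1)]]
    unfolding A_def root_bound_power[OF x(1) zero_less_Suc] t(2) by simp
  then have "A \<le> (1 + real m / t) * Gpar m t"
    by (rule power_le_imp_le_base) (use pos t in simp)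
  moreover have "1 / t \<le> B"
  proof (rule power_le_imp_le_base)
    have "B ^ Suc m = real (Suc m) * x"
      unfolding B_def using powr_divide_power[of "real (Suc m) * x" "Suc m" 1] x by simp
    moreover have "1 / x \<le> real (Suc m) * t ^ Suc m"
      using ypar_le_geom_sum_Suc[OF m t(1)] geom_sum_le[OF t(1), of "Suc m"] t(2) by simp
    ultimately show "(1 / t) ^ Suc m \<le> B ^ Suc m"
      using x t by (simp add: power_divide divide_le_eq mult_ac)
  qed (use pos in simp)
  then have "(1 + real m / t) * Gpar m t \<le> (1 + real m * B) * Gpar m t"
    using mult_left_mono[of "1 / t" B "real m"] pos by (intro mult_right_mono) auto
  ultimately have "A \<le> (1 + real m * B) * Gpar m t"
    by linarith
  moreover have "1 + real m * B > 0"
    using pos by (simp add: add_pos_nonneg)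
  ultimately have "A / (1 + real m * B) \<le> Gpar m t"
    by (simp add: pos_divide_le_eq mult.commute)
  then show ?thesis
    using pos unfolding t(3) A_def[symmetric] B_def[symmetric]
    by (simp add: pos_le_divide_eq)
qed

lemma G_Suc_div_root_tendsto:
  assumes m: "m \<ge> 1"
  shows "((\<lambda>x. G (Suc m) (1 / x) / (real (Suc m) / x powr (1 / real (Suc m)))) \<longlongrightarrow> 1)
           (at_right 0)"
proof (rule tendsto_sandwich)
  have small: "\<forall>\<^sub>F x in at_right (0::real). 0 < x \<and> x \<le> 1/2"
    unfolding eventually_at_right_field by (intro exI[of _ "1/2"]) auto
  show "\<forall>\<^sub>F x in at_right 0. 1 / (1 + real m * (real (Suc m) * x) powr (1 / real (Suc m)))
          \<le> G (Suc m) (1 / x) / (real (Suc m) / x powr (1 / real (Suc m)))"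
    using small by eventually_elim (use G_Suc_div_root_ge[OF m] in blast)
  show "\<forall>\<^sub>F x in at_right 0. G (Suc m) (1 / x) / (real (Suc m) / x powr (1 / real (Suc m))) \<le> 1"
    using small
  proof eventually_elim
    case (elim x)
    then have pos: "0 < real (Suc m) / x powr (1 / real (Suc m))"
      by simp
    show ?case
      unfolding divide_le_eq_1_pos[OF pos] using G_Suc_le_root[OF m] elim by blast
  qed
  have "((\<lambda>x. (real (Suc m) * x) powr (1 / real (Suc m))) \<longlongrightarrow> 0) (at_right 0)"
    using eventually_at_right_less[of "0::real"]
    by (intro tendsto_zero_powrI tendsto_mult_right_zero tendsto_ident_at tendsto_const)
       (auto elim: eventually_mono)
  then have "((\<lambda>x. 1 + real m * (real (Suc m) * x) powr (1 / real (Suc m))) \<longlongrightarrow> 1 + real m * 0)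
          (at_right 0)"
    by (intro tendsto_add tendsto_mult tendsto_const)
  from tendsto_divide[OF tendsto_const this]
  show "((\<lambda>x. 1 / (1 + real m * (real (Suc m) * x) powr (1 / real (Suc m)))) \<longlongrightarrow> 1)
          (at_right 0)"
    by simp
qed simp

theorem corollary4p2:
  fixes n :: nat
  assumes "n \<ge> 1"
  shows "(\<forall>x::real. 0 < x \<and> x \<le> 1/2 \<longrightarrow>
            (x \<le> (1/2) ^ n \<longrightarrow>
               real n / x powr (1 / real n) \<ge> G n (1 / x) \<and>
               G n (1 / x) \<ge> 1/2 * (real n / x powr (1 / real n))) \<and>
            (x > (1/2) ^ n \<longrightarrow>
               2 * log 2 (1 / x) \<ge> G n (1 / x) \<and>
               G n (1 / x) \<ge> 2 + ln (1 / (2 * x))))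
       \<and> ((\<lambda>x. G n (1 / x) / (real n / x powr (1 / real n))) \<longlongrightarrow> 1) (at_right 0)"
proof (cases "n = 1")
  case True
  have G1: "G (Suc 0) y = y" for y
    by (simp add: G_def)
  have "\<forall>\<^sub>F x in at_right 0. G 1 (1 / x) / (real 1 / x powr (1 / real 1)) = 1"
    using eventually_at_right_less[of "0::real"] by eventually_elim (simp add: G_def)
  then have "((\<lambda>x. G 1 (1 / x) / (real 1 / x powr (1 / real 1))) \<longlongrightarrow> 1) (at_right 0)"
    by (rule tendsto_eventually)
  moreover have "1 / (2 * x) \<le> 1 / x" if "x > 0" for x :: real
    using that by (intro divide_left_mono) auto
  ultimately show ?thesis
    unfolding True by (auto simp: G1)
next
  case False
  then obtain m where n: "n = Suc m" and m: "m \<ge> 1"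
    using assms by (cases n) auto
  show ?thesis
    unfolding n
    using G_Suc_le_root[OF m] G_Suc_ge_half_root[OF m] G_Suc_le_two_log2[OF m]
      G_Suc_ge_two_plus_ln[OF m] G_Suc_div_root_tendsto[OF m]
    by blast
qed

end
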